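(* Let $m,n,T$ be positive integers with $T\ge 2$, let $\mathbf{G}\in\mathbb{F}_2^{n\times m}$ have $n$ distinct nonzero rows $\mathbf{g}_1,\dots,\mathbf{g}_n$ spanning a subspace of dimension $T$, and let $\mathbf{A}\in\mathbb{F}_2^{T\times m}$ be a matrix whose rows form a basis of the row space of $\mathbf{G}$. Let $1\le k<\lceil T/2\rceil$, put $T_c=\lceil T/(2k-1)\rceil$ and $T_{\text{last}}=T-(2k-1)(T_c-1)$, and define $$T_{\text{ub}}=\begin{cases}2^T & \text{if } k=1,\\ 2(2k+1)^{T_c-1} & \text{if } k\neq 1 \text{ and } T_{\text{last}}=1,\\ (2k+1)^{T_c-1}(T_{\text{last}}+2) & \text{otherwise.}\end{cases}$$ Then there exists a matrix $\mathbf{P}\in\mathbb{F}_2^{T_k\times T}$ with $T_k\le\min\{n,T_{\text{ub}}\}$ such that every $\mathbf{g}_i$ is the sum over $\mathbb{F}_2$ of at most $k$ rows of $\mathbf{P}\mathbf{A}$. Moreover, for $k\neq 1$, $T_{\text{ub}}=2^{O\left(\frac{T}{k}\log k\right)}$.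
   Context: Such a $\mathbf{P}$ is called a $k$-limited-access scheme with $T_k$ transmissions for the coding matrix $\mathbf{A}$. Logarithms are base 2. *)

theory Defs
  imports "HOL-Analysis.Analysis" "HOL-Library.Z2"
begin

(* F_2 is the field type bit from HOL-Library.Z2; vectors in F_2^m are bit ^ 'm. *)

definition Tc :: "nat \<Rightarrow> nat \<Rightarrow> nat" where
  "Tc T k = nat \<lceil>real T / real (2*k - 1)\<rceil>"

definition Tlast :: "nat \<Rightarrow> nat \<Rightarrow> nat" where
  "Tlast T k = T - (2*k - 1) * (Tc T k - 1)"

definition Tub :: "nat \<Rightarrow> nat \<Rightarrow> nat" where
  "Tub T k = (if k = 1 then 2 ^ T
              else if Tlast T k = 1 then 2 * (2*k + 1) ^ (Tc T k - 1)
              else (2*k + 1) ^ (Tc T k - 1) * (Tlast T k + 2))"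

end

theory Submission
  imports Defs
begin

text \<open>
  Cut the basis indices {..<T} into Tc T k blocks of 2k-1 consecutive indices (the last one has
  Tlast T k indices), and for a block B take the atoms 0, a j (j \<in> B) and \<Sum>j\<in>B. a j. Any
  subset sum over B is a sum of k atoms: a subset W with at most k elements is used directly;
  otherwise B - W has at most k-1 elements and, in characteristic 2, the sum over W is the total
  of B plus the sum over B - W. Choosing one atom per block and adding gives a set R of at most
  \<Prod>(block size + 2) \<le> Tub T k vectors such that every vector of the span is a sum of k
  elements of R, hence (repeated summands cancel in pairs) of a set of at most k elements of R.
  The rows of P are the coordinates of the elements of R, or of the g i themselves when n is
  smaller. The asymptotic bound follows from Tub T k \<le> (2k+1)^Tc \<le> k^(3 Tc).
\<close>

lemma sum_lessThan_as_set_sum_char2: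
  fixes r :: "nat \<Rightarrow> 'a::ab_group_add"
  assumes char2: "\<And>x::'a. x + x = 0" and r: "\<forall>t<k. r t \<in> R"
  shows "\<exists>S\<subseteq>R. finite S \<and> card S \<le> k \<and> \<Sum>S = (\<Sum>t<k. r t)"
  using r
proof (induction k)
  case 0
  show ?case by (intro exI[of _ "{}"]) auto
next
  case (Suc k)
  then obtain S where S: "S \<subseteq> R" "finite S" "card S \<le> k" "\<Sum>S = (\<Sum>t<k. r t)" by auto
  show ?case
  proof (cases "r k \<in> S")
    case True
    have "\<Sum>(S - {r k}) = \<Sum>S - r k" using True S(2) by (simp add: sum_diff1)
    also have "\<dots> = \<Sum>S + r k" using char2[of "r k"] by (simp add: neg_eq_iff_add_eq_0)
    finally show ?thesis using S
      by (intro exI[of _ "S - {r k}"]) (auto simp: le_SucI order_trans[OF card_Diff1_le])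
  next
    case False
    then show ?thesis using S Suc.prems
      by (intro exI[of _ "insert (r k) S"]) (auto simp: add.commute)
  qed
qed

lemma sum_as_padded_sum:
  fixes a :: "nat \<Rightarrow> 'a::comm_monoid_add"
  assumes "finite V" and "card V \<le> k"
  shows "\<exists>l. (\<forall>t<k. l t \<in> insert 0 (a ` V)) \<and> (\<Sum>t<k. l t) = sum a V"
  using assms
proof (induction V arbitrary: k rule: finite_induct)
  case empty
  show ?case by (intro exI[of _ "\<lambda>_. 0"]) auto
next
  case (insert x V)
  then obtain k' where k': "k = Suc k'" "card V \<le> k'" by (cases k) auto
  with insert.IH obtain l where l: "\<forall>t<k'. l t \<in> insert 0 (a ` V)" "(\<Sum>t<k'. l t) = sum a V"
    by blast
  have "(\<Sum>t<k'. (l(k' := a x)) t) = (\<Sum>t<k'. l t)" by (rule sum.cong) auto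
  then show ?case using l k' insert.hyps
    by (intro exI[of _ "l(k' := a x)"]) (auto simp: less_Suc_eq add.commute)
qed

definition block_atoms :: "(nat \<Rightarrow> 'a::comm_monoid_add) \<Rightarrow> nat set \<Rightarrow> 'a set" where
  "block_atoms a B = insert 0 (insert (sum a B) (a ` B))"

lemma card_block_atoms_le:
  assumes "finite B"
  shows "card (block_atoms a B) \<le> (if card B \<le> 1 then 2 else card B + 2)"
proof (cases "card B \<le> 1")
  case True
  then have "B = {} \<or> (\<exists>x. B = {x})" using assms by (auto simp: le_Suc_eq card_Suc_eq)
  then show ?thesis by (auto simp: block_atoms_def card_insert_if)
next
  case False
  have "card (block_atoms a B) \<le> Suc (Suc (card (a ` B)))"
    unfolding block_atoms_def using assms
    by (intro order_trans[OF card_insert_le_m1] Suc_le_mono[THEN iffD2] card_insert_le_m1) auto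
  also have "card (a ` B) \<le> card B" by (rule card_image_le[OF assms])
  finally show ?thesis using False by simp
qed

lemma subset_sum_as_block_atoms_sum:
  fixes a :: "nat \<Rightarrow> 'a::ab_group_add"
  assumes char2: "\<And>x::'a. x + x = 0"
    and B: "finite B" "card B \<le> 2*k - 1" and k: "1 \<le> k" and W: "W \<subseteq> B"
  shows "\<exists>l. (\<forall>t<k. l t \<in> block_atoms a B) \<and> (\<Sum>t<k. l t) = sum a W"
proof (cases "card W \<le> k")
  case True
  with sum_as_padded_sum[OF finite_subset[OF W B(1)]] obtain l where
    "\<forall>t<k. l t \<in> insert 0 (a ` W)" "(\<Sum>t<k. l t) = sum a W" by blast
  then show ?thesis using W unfolding block_atoms_def by (intro exI[of _ l]) auto
next
  case False
  have "card (B - W) = card B - card W" using W finite_subset[OF W B(1)] by (simp add: card_Diff_subset)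
  then have "card (B - W) \<le> k - 1" using False B by simp
  with sum_as_padded_sum[of "B - W" "k - 1" a] B(1) obtain l where
    l: "\<forall>t<k-1. l t \<in> insert 0 (a ` (B - W))" "(\<Sum>t<k-1. l t) = sum a (B - W)" by auto
  have "sum a B = sum a W + sum a (B - W)"
    using sum.subset_diff[OF W B(1)] by (simp add: add.commute)
  then have total: "sum a (B - W) + sum a B = sum a W"
    using char2[of "sum a (B - W)"] by (simp add: algebra_simps)
  have "(\<Sum>t<k-1. (l(k-1 := sum a B)) t) = (\<Sum>t<k-1. l t)" by (rule sum.cong) auto
  moreover have "k = Suc (k - 1)" using k by simp
  ultimately have "(\<Sum>t<k. (l(k-1 := sum a B)) t) = sum a W"
    using l(2) total by (metis fun_upd_same sum.lessThan_Suc)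
  moreover have "(l(k-1 := sum a B)) t \<in> block_atoms a B" if "t < k" for t
    using l(1) that unfolding block_atoms_def by (cases "t < k - 1") auto
  ultimately show ?thesis by blast
qed

lemma Tc_bounds:
  assumes "1 \<le> k" and "1 \<le> T"
  shows "1 \<le> Tc T k" and "(2*k - 1) * (Tc T k - 1) < T" and "T \<le> (2*k - 1) * Tc T k"
    and "real (Tc T k) < real T / real (2*k - 1) + 1"
proof -
  define x where "x = real T / real (2*k - 1)"
  have c: "real (2*k - 1) \<ge> 1" using assms(1) by simp
  have "x > 0" using assms c by (simp add: x_def)
  then have Tc: "real (Tc T k) = of_int \<lceil>x\<rceil>" by (simp add: Tc_def x_def)
  have up: "x \<le> real (Tc T k)" and low: "real (Tc T k) < x + 1"
    using ceiling_correct[of x] unfolding Tc by auto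
  show "real (Tc T k) < real T / real (2*k - 1) + 1" using low by (simp add: x_def)
  show pos: "1 \<le> Tc T k" using up \<open>x > 0\<close> by simp
  have "real T \<le> real (2*k - 1) * real (Tc T k)" using up c by (simp add: x_def field_simps)
  then show "T \<le> (2*k - 1) * Tc T k" by (simp only: of_nat_mult[symmetric] of_nat_le_iff)
  have "real (Tc T k - 1) < x" using low pos by (simp add: of_nat_diff)
  then have "real (2*k - 1) * real (Tc T k - 1) < real T" using c by (simp add: x_def field_simps)
  then show "(2*k - 1) * (Tc T k - 1) < T" by (simp only: of_nat_mult[symmetric] of_nat_less_iff)
qed

definition block :: "nat \<Rightarrow> nat \<Rightarrow> nat \<Rightarrow> nat set" where
  "block T c b = {b*c ..< min T (Suc b * c)}"

lemma finite_block [simp]: "finite (block T c b)"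
  by (simp add: block_def)

lemma block_subset_lessThan: "block T c b \<subseteq> {..<T}"
  by (auto simp: block_def)

lemma card_block_le: "card (block T c b) \<le> c"
  by (auto simp: block_def)

lemma card_block_full: "Suc b * c \<le> T \<Longrightarrow> card (block T c b) = c"
  by (auto simp: block_def)

lemma card_block_last:
  "c * (m - 1) < T \<Longrightarrow> T \<le> c * m \<Longrightarrow> card (block T c (m - 1)) = T - c * (m - 1)"
  by (cases m) (auto simp: block_def min_def mult.commute)

lemma disjoint_block: "b \<noteq> b' \<Longrightarrow> block T c b \<inter> block T c b' = {}"
proof -
  have "j div c = b" if "j \<in> block T c b" for j b
    using that unfolding block_def by (intro div_nat_eqI) (auto simp: mult.commute)
  then show "b \<noteq> b' \<Longrightarrow> block T c b \<inter> block T c b' = {}" by blast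
qed

lemma UN_block:
  assumes "1 \<le> c" and "T \<le> c * m"
  shows "(\<Union>b<m. block T c b) = {..<T}"
proof
  show "(\<Union>b<m. block T c b) \<subseteq> {..<T}" using block_subset_lessThan by blast
  show "{..<T} \<subseteq> (\<Union>b<m. block T c b)"
  proof
    fix j assume j: "j \<in> {..<T}"
    then have jm: "j div c < m" using assms by (simp add: div_less_iff_less_mult mult.commute)
    have "j mod c < c" using assms(1) by simp
    moreover have "j div c * c + j mod c = j" by (rule div_mult_mod_eq)
    ultimately have "j div c * c \<le> j" and "j < j div c * c + c" by linarith+
    then have "j \<in> block T c (j div c)" using j by (auto simp: block_def)
    with jm show "j \<in> (\<Union>b<m. block T c b)" by blast
  qed
qed

lemma Tub_factor:
  "k \<noteq> 1 \<Longrightarrow> Tub T k = (2*k + 1) ^ (Tc T k - 1) * (if Tlast T k = 1 then 2 else Tlast T k + 2)"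
  by (simp add: Tub_def)

lemma prod_card_block_atoms_le_Tub:
  assumes k: "1 \<le> k" and T: "1 \<le> T"
  shows "(\<Prod>b<Tc T k. card (block_atoms a (block T (2*k - 1) b))) \<le> Tub T k"
proof -
  define c where "c = 2*k - 1"
  define m where "m = Tc T k"
  note Tc = Tc_bounds[OF k T, folded c_def m_def]
  let ?f = "\<lambda>b. card (block_atoms a (block T c b))"
  show ?thesis
  proof (cases "k = 1")
    case True
    then have "c = 1" and "m = T" using Tc by (simp_all add: c_def)
    have "?f b \<le> 2" for b
      using card_block_atoms_le[of "block T c b" a] card_block_le[of T c b] \<open>c = 1\<close> by simp
    then have "(\<Prod>b<m. ?f b) \<le> 2 ^ m" using prod_mono[of "{..<m}" ?f "\<lambda>_. 2"] by simp
    then show ?thesis using True \<open>m = T\<close> by (simp add: Tub_def c_def m_def)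
  next
    case False
    have full: "?f b \<le> 2*k + 1" if "b < m - 1" for b
    proof -
      have "Suc b * c \<le> (m - 1) * c" using that by (intro mult_le_mono1) simp
      also have "\<dots> \<le> T" using Tc by (simp add: mult.commute)
      finally have "card (block T c b) = c" by (rule card_block_full)
      moreover have "\<not> c \<le> 1" and "c + 2 = 2*k + 1" using k False by (simp_all add: c_def)
      ultimately show ?thesis using card_block_atoms_le[of "block T c b" a] by simp
    qed
    have "Tlast T k = T - c * (m - 1)" by (simp add: Tlast_def c_def m_def)
    then have "card (block T c (m - 1)) = Tlast T k" and "1 \<le> Tlast T k"
      using card_block_last[of c m T] Tc(2,3) by simp_all
    then have last: "?f (m - 1) \<le> (if Tlast T k = 1 then 2 else Tlast T k + 2)"
      using card_block_atoms_le[of "block T c (m - 1)" a] by auto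
    have "(\<Prod>b<m. ?f b) = (\<Prod>b<m - 1. ?f b) * ?f (m - 1)"
      using Tc(1) by (cases m) simp_all
    also have "\<dots> \<le> (2*k + 1) ^ (m - 1) * (if Tlast T k = 1 then 2 else Tlast T k + 2)"
    proof (rule mult_le_mono[OF _ last])
      show "(\<Prod>b<m - 1. ?f b) \<le> (2*k + 1) ^ (m - 1)"
        using prod_mono[of "{..<m - 1}" ?f "\<lambda>_. 2*k + 1"] full by simp
    qed
    finally show ?thesis by (simp only: Tub_factor[OF False] c_def m_def)
  qed
qed

definition block_sums :: "(nat \<Rightarrow> 'a::comm_monoid_add) \<Rightarrow> (nat \<Rightarrow> nat set) \<Rightarrow> nat \<Rightarrow> 'a set" where
  "block_sums a B m = (\<lambda>f. \<Sum>b<m. f b) ` (\<Pi>\<^sub>E b\<in>{..<m}. block_atoms a (B b))"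

lemma finite_block_sums:
  assumes "\<And>b. finite (B b)"
  shows "finite (block_sums a B m)"
  using assms by (simp add: block_sums_def block_atoms_def finite_PiE)

lemma card_block_sums_le:
  assumes "\<And>b. finite (B b)"
  shows "card (block_sums a B m) \<le> (\<Prod>b<m. card (block_atoms a (B b)))"
  unfolding block_sums_def
  by (rule order_trans[OF card_image_le]) (use assms in \<open>simp_all add: block_atoms_def finite_PiE card_PiE\<close>)

lemma sum_subsets_as_block_sums_sum:
  fixes a :: "nat \<Rightarrow> 'a::ab_group_add"
  assumes char2: "\<And>x::'a. x + x = 0" and k: "1 \<le> k"
    and B: "\<And>b. finite (B b)" "\<And>b. card (B b) \<le> 2*k - 1" and W: "\<And>b. W b \<subseteq> B b"
  shows "\<exists>S\<subseteq>block_sums a B m. card S \<le> k \<and> \<Sum>S = (\<Sum>b<m. sum a (W b))"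
proof -
  obtain L where L: "\<And>b t. t < k \<Longrightarrow> L b t \<in> block_atoms a (B b)"
      "\<And>b. (\<Sum>t<k. L b t) = sum a (W b)"
    using subset_sum_as_block_atoms_sum[OF char2 B k W] by metis
  define r where "r t = (\<Sum>b<m. L b t)" for t
  have "r t \<in> block_sums a B m" if "t < k" for t
  proof -
    have "restrict (\<lambda>b. L b t) {..<m} \<in> (\<Pi>\<^sub>E b\<in>{..<m}. block_atoms a (B b))"
      using L(1)[OF that] by auto
    moreover have "r t = (\<Sum>b<m. restrict (\<lambda>b. L b t) {..<m} b)" by (simp add: r_def)
    ultimately show ?thesis unfolding block_sums_def by blast
  qed
  then obtain S where "S \<subseteq> block_sums a B m" "card S \<le> k" "\<Sum>S = (\<Sum>t<k. r t)"
    using sum_lessThan_as_set_sum_char2[OF char2, of k r] by blast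
  moreover have "(\<Sum>t<k. r t) = (\<Sum>b<m. sum a (W b))"
    unfolding r_def sum.swap[of _ "{..<m}"] using L(2) by simp
  ultimately show ?thesis by metis
qed

lemma block_sums_subset_span:
  fixes a :: "nat \<Rightarrow> 'a::field ^ 'n"
  assumes "\<And>b. B b \<subseteq> I"
  shows "block_sums a B m \<subseteq> vec.span (a ` I)"
proof -
  have "block_atoms a (B b) \<subseteq> vec.span (a ` I)" for b
    using assms[of b] unfolding block_atoms_def
    by (auto intro!: vec.span_zero vec.span_base vec.span_sum[of "B b"])
  then show ?thesis unfolding block_sums_def by (auto intro!: vec.span_sum)
qed

lemma bit_vec_add_self: "(x::bit ^ 'n) + x = 0"
  by (simp add: vec_eq_iff)

lemma bit_vector_scalar_mult_eq: "(u::bit) *s (v::bit ^ 'n) = (if u = 1 then v else 0)"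
  by (cases u) auto

lemma k_sum_cover_of_span:
  fixes a :: "nat \<Rightarrow> bit ^ 'm"
  assumes k: "1 \<le> k" and T: "1 \<le> T"
  shows "\<exists>R. finite R \<and> card R \<le> Tub T k \<and> R \<subseteq> vec.span (a ` {..<T}) \<and>
           (\<forall>u. \<exists>S\<subseteq>R. card S \<le> k \<and> \<Sum>S = (\<Sum>j<T. u j *s a j))"
proof -
  define B where "B = block T (2*k - 1)"
  define m where "m = Tc T k"
  have "\<exists>S\<subseteq>block_sums a B m. card S \<le> k \<and> \<Sum>S = (\<Sum>j<T. u j *s a j)" for u :: "nat \<Rightarrow> bit"
  proof -
    define W where "W b = {j \<in> B b. u j = 1}" for b
    obtain S where S: "S \<subseteq> block_sums a B m" "card S \<le> k" "\<Sum>S = (\<Sum>b<m. sum a (W b))"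
      using sum_subsets_as_block_sums_sum[OF bit_vec_add_self k, of B W a m]
      by (auto simp: B_def W_def card_block_le)
    have "(\<Sum>b<m. sum a (W b)) = (\<Sum>b<m. \<Sum>j\<in>B b. u j *s a j)"
      by (simp add: W_def B_def sum.inter_filter bit_vector_scalar_mult_eq)
    also have "\<dots> = (\<Sum>j\<in>(\<Union>b<m. B b). u j *s a j)"
      by (rule sum.UNION_disjoint[symmetric]) (auto simp: B_def disjoint_block)
    also have "(\<Union>b<m. B b) = {..<T}"
      unfolding B_def m_def using k Tc_bounds(3)[OF k T] by (intro UN_block) auto
    finally show ?thesis using S by auto
  qed
  moreover have "finite (block_sums a B m)" by (rule finite_block_sums) (simp add: B_def)
  moreover have "card (block_sums a B m) \<le> Tub T k"
    using card_block_sums_le[of B a m] prod_card_block_atoms_le_Tub[OF k T, of a]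
    by (simp add: B_def m_def)
  moreover have "block_sums a B m \<subseteq> vec.span (a ` {..<T})"
    by (rule block_sums_subset_span) (simp add: B_def block_subset_lessThan)
  ultimately show ?thesis by blast
qed

lemma Tub_le_power:
  assumes k: "2 \<le> k" and T: "1 \<le> T"
  shows "Tub T k \<le> k ^ (3 * Tc T k)"
proof -
  define m where "m = Tc T k"
  note Tc = Tc_bounds[OF _ T, of k, folded m_def]
  have "Tlast T k \<le> 2*k - 1" using Tc k by (simp add: Tlast_def m_def algebra_simps)
  then have "(if Tlast T k = 1 then 2 else Tlast T k + 2) \<le> 2*k + 1" using k by auto
  moreover have "Tub T k = (2*k + 1) ^ (m - 1) * (if Tlast T k = 1 then 2 else Tlast T k + 2)"
    using Tub_factor k by (simp add: m_def)
  ultimately have "Tub T k \<le> (2*k + 1) ^ (m - 1) * (2*k + 1)" by (metis mult_le_mono2)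
  also have "\<dots> = (2*k + 1) ^ m" using Tc(1) k by (cases m) simp_all
  also have "\<dots> \<le> (k ^ 3) ^ m"
  proof (rule power_mono)
    have "4 * k \<le> (k * k) * k" using mult_le_mono[OF k k] by (intro mult_le_mono1) simp
    then show "2*k + 1 \<le> k ^ 3" unfolding power3_eq_cube using k by linarith
  qed simp
  finally show ?thesis by (simp add: power_mult m_def)
qed

lemma log_Tub_le:
  assumes k: "2 \<le> k" and kT: "real k < real_of_int \<lceil>real T / 2\<rceil>"
  shows "log 2 (real (Tub T k)) \<le> 6 * (real T / real k) * log 2 (real k)"
proof -
  have "int k < \<lceil>real T / 2\<rceil>" using kT by linarith
  then have "real k < real T / 2" by (simp only: less_ceiling_iff of_int_of_nat_eq)
  then have kT2: "1 < real T / real k" and T: "1 \<le> T" using k by (simp_all add: field_simps)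
  have "Tub T k > 0" using k by (simp add: Tub_def)
  then have "log 2 (real (Tub T k)) \<le> log 2 (real k ^ (3 * Tc T k))"
    using Tub_le_power[OF k T] k by (subst log_le_cancel_iff) (auto simp flip: of_nat_power)
  also have "\<dots> = real (3 * Tc T k) * log 2 (real k)" using k by (simp add: log_nat_power)
  also have "\<dots> \<le> 6 * (real T / real k) * log 2 (real k)"
  proof (rule mult_right_mono)
    have "real T / real (2*k - 1) \<le> real T / real k"
      using k by (intro divide_left_mono) (auto simp: of_nat_diff)
    moreover have "real (3 * Tc T k) = 3 * real (Tc T k)" by simp
    ultimately show "real (3 * Tc T k) \<le> 6 * (real T / real k)"
      using Tc_bounds(4)[OF _ T, of k] k kT2 by linarith
  qed (use k in simp)
  finally show ?thesis .
qed

lemma span_image_lessThan_coeffs: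
  fixes a :: "nat \<Rightarrow> 'a::field ^ 'n"
  assumes "inj_on a {..<T}" and "v \<in> vec.span (a ` {..<T})"
  shows "\<exists>u. v = (\<Sum>j<T. u j *s a j)"
proof -
  obtain w where "v = (\<Sum>x\<in>a ` {..<T}. w x *s x)"
    using assms(2) vec.span_finite[of "a ` {..<T}"] by auto
  also have "\<dots> = (\<Sum>j<T. w (a j) *s a j)" using sum.reindex[OF assms(1)] by simp
  finally show ?thesis by (rule exI[of _ "\<lambda>j. w (a j)"])
qed

lemma rows_of_finite_subset_of_span:
  fixes a :: "nat \<Rightarrow> 'a::field ^ 'n"
  assumes inj: "inj_on a {..<T}" and R: "finite R" "R \<subseteq> vec.span (a ` {..<T})"
  shows "\<exists>P. \<forall>S\<subseteq>R. \<exists>S'\<subseteq>{..<card R}. card S' = card S \<and> \<Sum>S = (\<Sum>r\<in>S'. \<Sum>j<T. P r j *s a j)"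
proof -
  obtain e where e: "bij_betw e {..<card R} R"
    using ex_bij_betw_nat_finite[OF R(1)] by (auto simp: atLeast0LessThan)
  have "\<exists>u. e r = (\<Sum>j<T. u j *s a j)" if "r < card R" for r
  proof -
    have "e r \<in> R" using bij_betwE[OF e] that by simp
    then show ?thesis using span_image_lessThan_coeffs[OF inj] R(2) by blast
  qed
  then obtain P where P: "\<And>r. r < card R \<Longrightarrow> e r = (\<Sum>j<T. P r j *s a j)" by metis
  have "\<exists>S'\<subseteq>{..<card R}. card S' = card S \<and> \<Sum>S = (\<Sum>r\<in>S'. \<Sum>j<T. P r j *s a j)"
    if S: "S \<subseteq> R" for S
  proof (intro exI conjI)
    let ?S' = "{r\<in>{..<card R}. e r \<in> S}"
    have inj_S': "inj_on e ?S'" by (rule inj_on_subset[OF bij_betw_imp_inj_on[OF e]]) auto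
    have img: "e ` ?S' = S"
    proof
      show "S \<subseteq> e ` ?S'"
      proof
        fix x assume "x \<in> S"
        moreover have "x \<in> e ` {..<card R}" using bij_betw_imp_surj_on[OF e] S \<open>x \<in> S\<close> by blast
        ultimately show "x \<in> e ` ?S'" by auto
      qed
    qed auto
    show "?S' \<subseteq> {..<card R}" by auto
    show "card ?S' = card S" using card_image[OF inj_S'] img by simp
    have "\<Sum>S = (\<Sum>r\<in>?S'. e r)" using sum.reindex[OF inj_S', of "\<lambda>x. x"] img by simp
    also have "\<dots> = (\<Sum>r\<in>?S'. \<Sum>j<T. P r j *s a j)" by (rule sum.cong) (auto simp: P)
    finally show "\<Sum>S = (\<Sum>r\<in>?S'. \<Sum>j<T. P r j *s a j)" .
  qed
  then show ?thesis by blast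
qed

lemma k_sum_cover_of_vectors:
  fixes g a :: "nat \<Rightarrow> bit ^ 'm"
  assumes inj: "inj_on a {..<T}" and g: "\<And>i. i < n \<Longrightarrow> g i \<in> vec.span (a ` {..<T})"
    and k: "1 \<le> k" and T: "1 \<le> T"
  obtains R where "finite R" "card R \<le> min n (Tub T k)" "R \<subseteq> vec.span (a ` {..<T})"
    and "\<forall>i<n. \<exists>S\<subseteq>R. card S \<le> k \<and> g i = \<Sum>S"
proof (cases "n \<le> Tub T k")
  case True
  have "card (g ` {..<n}) \<le> min n (Tub T k)" using True card_image_le[of "{..<n}" g] by simp
  moreover have "\<exists>S\<subseteq>g ` {..<n}. card S \<le> k \<and> g i = \<Sum>S" if i: "i < n" for i
    using i k by (intro exI[of _ "{g i}"]) simp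
  ultimately show thesis using that[of "g ` {..<n}"] g by blast
next
  case False
  obtain R where R: "finite R" "card R \<le> Tub T k" "R \<subseteq> vec.span (a ` {..<T})"
    and sums: "\<And>u. \<exists>S\<subseteq>R. card S \<le> k \<and> \<Sum>S = (\<Sum>j<T. u j *s a j)"
    using k_sum_cover_of_span[OF k T, of a] by auto
  have "\<exists>S\<subseteq>R. card S \<le> k \<and> g i = \<Sum>S" if "i < n" for i
    using sums span_image_lessThan_coeffs[OF inj g[OF that]] by metis
  with False R show thesis using that[of R] by auto
qed

theorem theorem1:
  fixes g :: "nat \<Rightarrow> bit ^ 'm::finite"
    and a :: "nat \<Rightarrow> bit ^ 'm"
    and n T k :: nat
  assumes "n \<ge> 1" and "T \<ge> 2"
    and "inj_on g {..<n}" and "\<forall>i<n. g i \<noteq> 0"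
    and "vec.dim (g ` {..<n}) = T"
    and "inj_on a {..<T}" and "vec.independent (a ` {..<T})"
    and "vec.span (a ` {..<T}) = vec.span (g ` {..<n})"
    and "1 \<le> k" and "real k < real_of_int \<lceil>real T / 2\<rceil>"
  shows "(\<exists>Tk (P :: nat \<Rightarrow> nat \<Rightarrow> bit).
            Tk \<le> min n (Tub T k) \<and>
            (\<forall>i<n. \<exists>S. S \<subseteq> {..<Tk} \<and> card S \<le> k \<and>
                 g i = (\<Sum>r\<in>S. \<Sum>j<T. P r j *s a j)))
       \<and> (\<exists>C::real. \<forall>T' k'::nat. 2 \<le> k' \<and> real k' < real_of_int \<lceil>real T' / 2\<rceil> \<longrightarrow>
            log 2 (real (Tub T' k')) \<le> C * (real T' / real k') * log 2 (real k'))"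
proof
  have T: "1 \<le> T" using assms(2) by simp
  have g_span: "g i \<in> vec.span (a ` {..<T})" if "i < n" for i
    using assms(8) that by (auto intro: vec.span_base)
  obtain R where R: "finite R" "card R \<le> min n (Tub T k)" "R \<subseteq> vec.span (a ` {..<T})"
    and cover: "\<forall>i<n. \<exists>S\<subseteq>R. card S \<le> k \<and> g i = \<Sum>S"
    using k_sum_cover_of_vectors[OF assms(6) g_span assms(9) T] .
  obtain P where rows: "\<forall>S\<subseteq>R.
      \<exists>S'\<subseteq>{..<card R}. card S' = card S \<and> \<Sum>S = (\<Sum>r\<in>S'. \<Sum>j<T. P r j *s a j)"
    using rows_of_finite_subset_of_span[OF assms(6) R(1,3)] by blast
  have "\<forall>i<n. \<exists>S'. S' \<subseteq> {..<card R} \<and> card S' \<le> k \<and> g i = (\<Sum>r\<in>S'. \<Sum>j<T. P r j *s a j)"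
  proof (intro allI impI)
    fix i assume "i < n"
    then obtain S where S: "S \<subseteq> R" "card S \<le> k" "g i = \<Sum>S" using cover by blast
    then obtain S' where "S' \<subseteq> {..<card R}" "card S' = card S"
      "\<Sum>S = (\<Sum>r\<in>S'. \<Sum>j<T. P r j *s a j)"
      using rows by blast
    with S show "\<exists>S'. S' \<subseteq> {..<card R} \<and> card S' \<le> k \<and> g i = (\<Sum>r\<in>S'. \<Sum>j<T. P r j *s a j)"
      by auto
  qed
  with R(2) show "\<exists>Tk (P :: nat \<Rightarrow> nat \<Rightarrow> bit). Tk \<le> min n (Tub T k) \<and>
      (\<forall>i<n. \<exists>S. S \<subseteq> {..<Tk} \<and> card S \<le> k \<and> g i = (\<Sum>r\<in>S. \<Sum>j<T. P r j *s a j))"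
    by blast
next
  show "\<exists>C::real. \<forall>T' k'::nat. 2 \<le> k' \<and> real k' < real_of_int \<lceil>real T' / 2\<rceil> \<longrightarrow>
      log 2 (real (Tub T' k')) \<le> C * (real T' / real k') * log 2 (real k')"
    using log_Tub_le by blast
qed

end
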